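(* Let $\alpha,\beta\in\mathbb{R}$ with $\beta-\alpha-2\neq0$, and set $\mathbf C_{\alpha,\beta}=\frac{(\beta-3)(2\alpha-\beta+1)}{4}$. For every $f\in C_0^\infty((0,\infty))$ (complex-valued), with $f^\#(r)=f''(r)+\frac{\beta-2}{r}f'(r)+\frac{(\beta-3)^2}{4r^2}f(r)$, \[ \left\|\frac{f'}{r}+\frac{\beta-3}{2r^2}f\right\|_{L^2_\beta}^2=\frac{1}{(\beta-\alpha-2)^2}\left\|\mathfrak L_\alpha f+\mathbf C_{\alpha,\beta}\frac{f}{r^2}\right\|_{L^2_\beta}^2-\frac{1}{(\beta-\alpha-2)^2}\left\|f^\#\right\|_{L^2_\beta}^2 . \]
   Context: For $\beta\in\mathbb{R}$, $L^2_\beta$ denotes the weighted space on $(0,\infty)$ with norm $\|g\|_{L^2_\beta}^2=\int_0^\infty |g(r)|^2 r^\beta\,dr$. For $\alpha\in\mathbb{R}$, $\mathfrak L_\alpha$ is the operator $\mathfrak L_\alpha f(r)=f''(r)+\frac{\alpha}{r}f'(r)$. Expressions such as $f/r^2$ denote the function $r\mapsto f(r)/r^2$. *)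

theory Defs
  imports "HOL-Analysis.Analysis"
begin

definition D :: "(real \<Rightarrow> complex) \<Rightarrow> real \<Rightarrow> complex" where
  "D f = (\<lambda>r. vector_derivative f (at r))"

definition C0inf :: "(real \<Rightarrow> complex) set" where
  "C0inf = {f. (\<forall>n x. ((D ^^ n) f differentiable at x)) \<and>
               (\<exists>a b. 0 < a \<and> a \<le> b \<and> (\<forall>x. x \<notin> {a..b} \<longrightarrow> f x = 0))}"

definition L2w_sq :: "real \<Rightarrow> (real \<Rightarrow> complex) \<Rightarrow> real" where
  "L2w_sq \<beta> g = (LINT r:{0<..}|lborel. (cmod (g r))\<^sup>2 * r powr \<beta>)"

definition Lop :: "real \<Rightarrow> (real \<Rightarrow> complex) \<Rightarrow> real \<Rightarrow> complex" where
  "Lop \<alpha> f = (\<lambda>r. D (D f) r + of_real (\<alpha> / r) * D f r)"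

end

theory Submission
  imports Defs
begin

text \<open>
  With \<open>A = f'/r + (\<beta> - 3) f / (2 r\<^sup>2)\<close> and \<open>c = \<beta> - \<alpha> - 2\<close> one has pointwise
  \<open>f\<^sup># = r A' + (\<beta> + 1) A / 2\<close> and \<open>L\<^sub>\<alpha> f + C\<^sub>\<alpha>\<^sub>,\<^sub>\<beta> f / r\<^sup>2 = f\<^sup># - c A\<close>.
  Since \<open>r\<^sup>\<beta> Re ((r A' + (\<beta> + 1) A / 2) A\<^sup>*)\<close> is the derivative of \<open>r\<^bsup>\<beta> + 1\<^esup> |A|\<^sup>2 / 2\<close>,
  it integrates to zero when \<open>A\<close> has compact support in \<open>(0, \<infinity>)\<close>. So \<open>f\<^sup>#\<close> and \<open>A\<close> are
  orthogonal in \<open>L\<^sup>2\<^sub>\<beta>\<close>, and \<open>\<parallel>f\<^sup># - c A\<parallel>\<^sup>2 = \<parallel>f\<^sup>#\<parallel>\<^sup>2 + c\<^sup>2 \<parallel>A\<parallel>\<^sup>2\<close>, which rearranges to the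
  claimed identity.
\<close>

lemma D_eq_0_if_vanishes_on_open:
  assumes "open S" "x \<in> S" "\<And>y. y \<in> S \<Longrightarrow> g y = 0"
  shows "D g x = 0"
proof -
  have "(g has_vector_derivative 0) (at x)"
    by (rule has_vector_derivative_transform_within_open[of "\<lambda>_. 0" 0 x S])
       (use assms in \<open>auto intro: has_vector_derivative_const\<close>)
  then show ?thesis
    unfolding D_def by (rule vector_derivative_at)
qed

lemma C0inf_has_vector_derivative:
  assumes "f \<in> C0inf"
  shows "((D ^^ n) f has_vector_derivative (D ^^ Suc n) f x) (at x)"
proof -
  have "(D ^^ n) f differentiable at x"
    using assms unfolding C0inf_def by blast
  then show ?thesis
    by (simp add: D_def vector_derivative_works[symmetric])
qed

lemma C0inf_continuous_on:
  assumes "f \<in> C0inf"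
  shows "continuous_on S ((D ^^ n) f)"
  by (rule continuous_on_vector_derivative)
     (rule has_vector_derivative_at_within[OF C0inf_has_vector_derivative[OF assms]])

lemma C0inf_support:
  assumes "f \<in> C0inf"
  obtains a b where "0 < a" "a < b" "\<And>n x. x \<notin> {a<..<b} \<Longrightarrow> (D ^^ n) f x = 0"
proof -
  obtain a b where "0 < a" "a \<le> b" and f0: "\<And>x. x \<notin> {a..b} \<Longrightarrow> f x = 0"
    using assms unfolding C0inf_def by blast
  have vanish: "(D ^^ n) f x = 0" if "x \<notin> {a..b}" for n x
    using that
  proof (induction n arbitrary: x)
    case 0
    then show ?case by (simp add: f0)
  next
    case (Suc n)
    then show ?case
      by simp (rule D_eq_0_if_vanishes_on_open[of "- {a..b}"], auto)
  qed
  show thesis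
  proof
    show "0 < a / 2" "a / 2 < b + 1"
      using \<open>0 < a\<close> \<open>a \<le> b\<close> by auto
    show "(D ^^ n) f x = 0" if "x \<notin> {a / 2<..<b + 1}" for n x
      using that \<open>0 < a\<close> by (intro vanish) auto
  qed
qed

lemma has_vector_derivative_radial:
  fixes g h :: "real \<Rightarrow> complex" and k r :: real
  assumes "r > 0" and g: "(g has_vector_derivative g') (at r)" and h: "(h has_vector_derivative h') (at r)"
  shows "((\<lambda>r. g r / of_real r + of_real (k / (2 * r\<^sup>2)) * h r) has_vector_derivative
     g' / of_real r - g r / of_real (r\<^sup>2) + of_real (k / (2 * r\<^sup>2)) * h' - of_real (k / r ^ 3) * h r) (at r)"
proof -
  have inv: "((\<lambda>r. 1 / r) has_real_derivative - 1 / r\<^sup>2) (at r)"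
    using \<open>r > 0\<close> by (auto intro!: derivative_eq_intros simp: power2_eq_square)
  have coeff: "((\<lambda>r. k / (2 * r\<^sup>2)) has_real_derivative - k / r ^ 3) (at r)"
    using \<open>r > 0\<close> by (auto intro!: derivative_eq_intros simp: power2_eq_square power3_eq_cube)
  have "((\<lambda>r. of_real (1 / r) * g r + of_real (k / (2 * r\<^sup>2)) * h r) has_vector_derivative
     of_real (1 / r) * g' + of_real (- 1 / r\<^sup>2) * g r
     + (of_real (k / (2 * r\<^sup>2)) * h' + of_real (- k / r ^ 3) * h r)) (at r)"
    by (intro has_vector_derivative_add has_vector_derivative_mult has_vector_derivative_of_real
        inv coeff g h)
  moreover have "(\<lambda>r. of_real (1 / r) * g r) = (\<lambda>r. g r / of_real r)"
    by (simp add: field_simps)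
  moreover have "of_real (1 / r) * g' + of_real (- 1 / r\<^sup>2) * g r
       + (of_real (k / (2 * r\<^sup>2)) * h' + of_real (- k / r ^ 3) * h r)
     = g' / of_real r - g r / of_real (r\<^sup>2) + of_real (k / (2 * r\<^sup>2)) * h' - of_real (k / r ^ 3) * h r"
    by (simp add: field_simps)
  ultimately show ?thesis
    by (simp add: add_diff_eq)
qed

lemma has_integral_L2w_sq:
  fixes X :: "real \<Rightarrow> complex"
  assumes "0 < a" "continuous_on {a..b} X" "\<And>r. 0 < r \<Longrightarrow> r \<notin> {a..b} \<Longrightarrow> X r = 0"
  shows "((\<lambda>r. (cmod (X r))\<^sup>2 * r powr \<beta>) has_integral L2w_sq \<beta> X) {a..b}"
proof -
  let ?F = "\<lambda>r. (cmod (X r))\<^sup>2 * r powr \<beta>"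
  have cont: "continuous_on {a..b} ?F"
    using \<open>0 < a\<close> by (intro continuous_intros assms(2)) auto
  have "L2w_sq \<beta> X = (LINT r:{a..b}|lborel. ?F r)"
    unfolding L2w_sq_def set_lebesgue_integral_def
    by (rule Bochner_Integration.integral_cong) (use assms in \<open>auto simp: indicator_def\<close>)
  also have "\<dots> = integral {a..b} ?F"
    by (rule set_borel_integral_eq_integral(2)[OF borel_integrable_atLeastAtMost'[OF cont]])
  finally show ?thesis
    using integrable_integral[OF integrable_continuous_interval[OF cont]] by simp
qed

lemma has_integral_Euler_cross_term:
  fixes A A' :: "real \<Rightarrow> complex"
  assumes "0 < a" "a \<le> b" "A a = 0" "A b = 0"
    and A': "\<And>r. r \<in> {a..b} \<Longrightarrow> (A has_vector_derivative A' r) (at r within {a..b})"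
  shows "((\<lambda>r. r powr \<beta> * Re ((of_real r * A' r + of_real ((\<beta> + 1) / 2) * A r) * cnj (A r)))
           has_integral 0) {a..b}"
proof -
  define F where "F r = r powr \<beta> * Re ((of_real r * A' r + of_real ((\<beta> + 1) / 2) * A r) * cnj (A r))"
    for r
  define Q where "Q r = of_real (r powr (\<beta> + 1)) * (A r * cnj (A r)) / 2" for r
  have "(Q has_vector_derivative of_real (F r)) (at r within {a..b})" if "r \<in> {a..b}" for r
  proof -
    have r: "r > 0"
      using that \<open>0 < a\<close> by auto
    let ?E = "(of_real r * A' r + of_real ((\<beta> + 1) / 2) * A r) * cnj (A r)"
    have "((\<lambda>r. r powr (\<beta> + 1)) has_real_derivative (\<beta> + 1) * r powr \<beta>) (at r within {a..b})"
      using has_real_derivative_powr[OF r, of "\<beta> + 1"] by (auto intro: has_field_derivative_at_within)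
    then have "(Q has_vector_derivative
        (of_real (r powr (\<beta> + 1)) * (A r * cnj (A' r) + A' r * cnj (A r))
         + of_real ((\<beta> + 1) * r powr \<beta>) * (A r * cnj (A r))) / 2) (at r within {a..b})"
      unfolding Q_def
      by (intro has_vector_derivative_divide has_vector_derivative_mult has_vector_derivative_of_real
          has_vector_derivative_cnj A' that)
    moreover have "of_real (F r) = of_real (r powr \<beta>) * (?E + cnj ?E) / 2"
      unfolding F_def complex_add_cnj by simp
    moreover have "r powr (\<beta> + 1) = r * r powr \<beta>"
      using r by (simp add: powr_add)
    ultimately show ?thesis
      by (elim has_vector_derivative_eq_rhs) (simp add: algebra_simps)
  qed
  then have "((\<lambda>r. of_real (F r)) has_integral (Q b - Q a)) {a..b}"
    by (intro fundamental_theorem_of_calculus \<open>a \<le> b\<close>)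
  then have "((\<lambda>r. Re (of_real (F r))) has_integral Re (Q b - Q a)) {a..b}"
    by (rule has_integral_Re)
  then show ?thesis
    using assms(3,4) by (simp add: F_def Q_def)
qed

lemma cmod_diff_of_real_mult_square:
  fixes A B :: complex
  shows "(cmod (B - of_real c * A))\<^sup>2 = (cmod B)\<^sup>2 - 2 * c * Re (B * cnj A) + c\<^sup>2 * (cmod A)\<^sup>2"
  unfolding cmod_power2 by (simp add: power2_eq_square algebra_simps)

lemma L2w_sq_Euler_Pythagoras:
  fixes A A' B :: "real \<Rightarrow> complex"
  assumes "0 < a" "a \<le> b"
    and A': "\<And>r. r \<in> {a..b} \<Longrightarrow> (A has_vector_derivative A' r) (at r within {a..b})"
    and B: "continuous_on {a..b} B" "\<And>r. r \<in> {a..b} \<Longrightarrow> B r = of_real r * A' r + of_real ((\<beta> + 1) / 2) * A r"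
    and support: "\<And>r. 0 < r \<Longrightarrow> r \<notin> {a<..<b} \<Longrightarrow> A r = 0 \<and> B r = 0"
  shows "L2w_sq \<beta> (\<lambda>r. B r - of_real c * A r) = L2w_sq \<beta> B + c\<^sup>2 * L2w_sq \<beta> A"
proof -
  have L2: "((\<lambda>r. (cmod (X r))\<^sup>2 * r powr \<beta>) has_integral L2w_sq \<beta> X) {a..b}"
    if "continuous_on {a..b} X" "\<And>r. 0 < r \<Longrightarrow> r \<notin> {a<..<b} \<Longrightarrow> X r = 0" for X
    using that by (intro has_integral_L2w_sq \<open>0 < a\<close>) auto
  have A: "continuous_on {a..b} A"
    using A' by (rule continuous_on_vector_derivative)
  have "A a = 0" "A b = 0"
    using support \<open>0 < a\<close> \<open>a \<le> b\<close> by auto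
  from has_integral_Euler_cross_term[where \<beta> = \<beta>, OF \<open>0 < a\<close> \<open>a \<le> b\<close> this A']
  have cross: "((\<lambda>r. r powr \<beta> * Re (B r * cnj (A r))) has_integral 0) {a..b}"
    by (rule has_integral_eq[rotated]) (simp_all add: B(2))
  have combined: "((\<lambda>r. (cmod (B r))\<^sup>2 * r powr \<beta> - 2 * c * (r powr \<beta> * Re (B r * cnj (A r)))
           + c\<^sup>2 * ((cmod (A r))\<^sup>2 * r powr \<beta>))
         has_integral L2w_sq \<beta> B - 2 * c * 0 + c\<^sup>2 * L2w_sq \<beta> A) {a..b}"
    using support
    by (intro has_integral_add has_integral_diff has_integral_mult_right cross L2 A B(1)) auto
  have expand: "(cmod (B r))\<^sup>2 * r powr \<beta> - 2 * c * (r powr \<beta> * Re (B r * cnj (A r)))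
           + c\<^sup>2 * ((cmod (A r))\<^sup>2 * r powr \<beta>) = (cmod (B r - of_real c * A r))\<^sup>2 * r powr \<beta>" for r
    unfolding cmod_diff_of_real_mult_square by (simp add: algebra_simps)
  have "((\<lambda>r. (cmod (B r - of_real c * A r))\<^sup>2 * r powr \<beta>)
      has_integral L2w_sq \<beta> (\<lambda>r. B r - of_real c * A r)) {a..b}"
    using support by (intro L2 continuous_intros A B(1)) auto
  moreover from combined have "((\<lambda>r. (cmod (B r - of_real c * A r))\<^sup>2 * r powr \<beta>)
      has_integral L2w_sq \<beta> B - 2 * c * 0 + c\<^sup>2 * L2w_sq \<beta> A) {a..b}"
    by (rule has_integral_eq[rotated]) (rule expand)
  ultimately show ?thesis
    by (simp add: has_integral_unique)
qed

lemma shifted_Lop_identity: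
  fixes f0 f1 f2 :: complex and r \<alpha> \<beta> :: real
  shows "f2 + of_real (\<alpha> / r) * f1 + of_real ((\<beta> - 3) * (2 * \<alpha> - \<beta> + 1) / 4) * f0 / of_real (r\<^sup>2)
    = (f2 + of_real ((\<beta> - 2) / r) * f1 + of_real ((\<beta> - 3)\<^sup>2 / (4 * r\<^sup>2)) * f0)
      - of_real (\<beta> - \<alpha> - 2) * (f1 / of_real r + of_real ((\<beta> - 3) / (2 * r\<^sup>2)) * f0)"
proof (cases "r = 0")
  case False
  then show ?thesis
    by (simp add: field_simps power2_eq_square)
qed simp

lemma sharp_Euler_identity:
  fixes f0 f1 f2 :: complex and r \<beta> :: real
  assumes "r \<noteq> 0"
  shows "f2 + of_real ((\<beta> - 2) / r) * f1 + of_real ((\<beta> - 3)\<^sup>2 / (4 * r\<^sup>2)) * f0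
    = of_real r * (f2 / of_real r - f1 / of_real (r\<^sup>2) + of_real ((\<beta> - 3) / (2 * r\<^sup>2)) * f1
                   - of_real ((\<beta> - 3) / r ^ 3) * f0)
      + of_real ((\<beta> + 1) / 2) * (f1 / of_real r + of_real ((\<beta> - 3) / (2 * r\<^sup>2)) * f0)"
  using assms by (simp add: field_simps power2_eq_square power3_eq_cube)

definition sharp :: "real \<Rightarrow> (real \<Rightarrow> complex) \<Rightarrow> real \<Rightarrow> complex" where
  "sharp \<beta> f = (\<lambda>r. D (D f) r + of_real ((\<beta> - 2) / r) * D f r + of_real ((\<beta> - 3)\<^sup>2 / (4 * r\<^sup>2)) * f r)"

text \<open>Equals \<open>r\<^bsup>(1 - \<beta>)/2\<^esup> (r\<^bsup>(\<beta> - 3)/2\<^esup> f)'\<close>.\<close>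
definition conjugated_derivative :: "real \<Rightarrow> (real \<Rightarrow> complex) \<Rightarrow> real \<Rightarrow> complex" where
  "conjugated_derivative \<beta> f = (\<lambda>r. D f r / of_real r + of_real ((\<beta> - 3) / (2 * r\<^sup>2)) * f r)"

lemma L2w_sq_sharp_minus_conjugated_derivative:
  assumes "f \<in> C0inf"
  shows "L2w_sq \<beta> (\<lambda>r. sharp \<beta> f r - of_real c * conjugated_derivative \<beta> f r)
    = L2w_sq \<beta> (sharp \<beta> f) + c\<^sup>2 * L2w_sq \<beta> (conjugated_derivative \<beta> f)"
proof -
  obtain a b where "0 < a" "a < b" and vanish: "\<And>n x. x \<notin> {a<..<b} \<Longrightarrow> (D ^^ n) f x = 0"
    using C0inf_support[OF assms] by metis
  have f': "(f has_vector_derivative D f x) (at x)" "(D f has_vector_derivative D (D f) x) (at x)" for x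
    using C0inf_has_vector_derivative[OF assms, of 0] C0inf_has_vector_derivative[OF assms, of 1]
    by simp_all
  have cont: "continuous_on S f" "continuous_on S (D f)" "continuous_on S (D (D f))" for S
    using C0inf_continuous_on[OF assms, of S 0] C0inf_continuous_on[OF assms, of S 1]
      C0inf_continuous_on[OF assms, of S 2]
    by (simp_all add: numeral_2_eq_2)
  define A' where "A' r = D (D f) r / of_real r - D f r / of_real (r\<^sup>2)
    + of_real ((\<beta> - 3) / (2 * r\<^sup>2)) * D f r - of_real ((\<beta> - 3) / r ^ 3) * f r" for r
  show ?thesis
  proof (rule L2w_sq_Euler_Pythagoras[OF \<open>0 < a\<close> less_imp_le[OF \<open>a < b\<close>]])
    show "(conjugated_derivative \<beta> f has_vector_derivative A' r) (at r within {a..b})"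
      if "r \<in> {a..b}" for r
    proof -
      have "r > 0"
        using that \<open>0 < a\<close> by auto
      from has_vector_derivative_radial[where k = "\<beta> - 3", OF this f'(2) f'(1)]
      show ?thesis
        unfolding conjugated_derivative_def A'_def by (rule has_vector_derivative_at_within)
    qed
    show "continuous_on {a..b} (sharp \<beta> f)"
      unfolding sharp_def using \<open>0 < a\<close> by (intro continuous_intros cont) auto
    show "sharp \<beta> f r = of_real r * A' r + of_real ((\<beta> + 1) / 2) * conjugated_derivative \<beta> f r"
      if "r \<in> {a..b}" for r
      unfolding conjugated_derivative_def A'_def sharp_def using that \<open>0 < a\<close>
      by (intro sharp_Euler_identity) auto
    show "conjugated_derivative \<beta> f r = 0 \<and> sharp \<beta> f r = 0" if "r \<notin> {a<..<b}" for r
      using vanish[OF that, of 0] vanish[OF that, of 1] vanish[OF that, of 2]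
      by (simp add: conjugated_derivative_def sharp_def numeral_2_eq_2)
  qed
qed

theorem mainTheorem7:
  fixes \<alpha> \<beta> :: real and f :: "real \<Rightarrow> complex"
  assumes "\<beta> - \<alpha> - 2 \<noteq> 0"
    and "f \<in> C0inf"
  shows "L2w_sq \<beta> (\<lambda>r. D f r / of_real r + of_real ((\<beta> - 3) / (2 * r\<^sup>2)) * f r)
       = 1 / (\<beta> - \<alpha> - 2)\<^sup>2 *
           L2w_sq \<beta> (\<lambda>r. Lop \<alpha> f r + of_real ((\<beta> - 3) * (2 * \<alpha> - \<beta> + 1) / 4) * f r / of_real (r\<^sup>2))
         - 1 / (\<beta> - \<alpha> - 2)\<^sup>2 *
           L2w_sq \<beta> (\<lambda>r. D (D f) r + of_real ((\<beta> - 2) / r) * D f r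
                         + of_real ((\<beta> - 3)\<^sup>2 / (4 * r\<^sup>2)) * f r)"
proof -
  let ?c = "\<beta> - \<alpha> - 2"
  have "(\<lambda>r. Lop \<alpha> f r + of_real ((\<beta> - 3) * (2 * \<alpha> - \<beta> + 1) / 4) * f r / of_real (r\<^sup>2))
      = (\<lambda>r. sharp \<beta> f r - of_real ?c * conjugated_derivative \<beta> f r)"
    unfolding Lop_def sharp_def conjugated_derivative_def by (intro ext shifted_Lop_identity)
  moreover have "L2w_sq \<beta> (conjugated_derivative \<beta> f)
      = 1 / ?c\<^sup>2 * L2w_sq \<beta> (\<lambda>r. sharp \<beta> f r - of_real ?c * conjugated_derivative \<beta> f r)
        - 1 / ?c\<^sup>2 * L2w_sq \<beta> (sharp \<beta> f)"
    using L2w_sq_sharp_minus_conjugated_derivative[OF assms(2), of \<beta> ?c] assms(1)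
    by (simp add: field_simps)
  ultimately show ?thesis
    unfolding sharp_def conjugated_derivative_def by simp
qed

end
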